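(* Let $a,b,c,d,e\in\mathbb C$ with $a\notin\mathbb Z$ and $e\notin\{0,-1,-2,\dots\}$. Then, as an identity of formal power series in $x,y$, $$F(a,b;e;x)\,F(c,d;1-a;y)=H_2(a,b,c,d;e;x,-y)+\sum_{k=1}^\infty\sum_{l=1}^k\frac{(k-1)!}{(l-1)!\,l!\,(k-l)!}\,\frac{(-1)^{k-l}(b)_l(c)_k(d)_k}{(1-a)_k(1-a)_{k-l}(e)_l}\,x^ly^k\,H_2(a-k+l,b+l,c+k,d+k;e+l;x,-y).$$
   Context: Pochhammer symbol: $(\lambda)_k=\Gamma(\lambda+k)/\Gamma(\lambda)$ for every integer $k$ (possibly negative) whenever defined; $(\lambda)_0=1$. Gauss function $F(a,b;c;x)=\sum_{k\ge0}\frac{(a)_k(b)_k}{(c)_k k!}x^k$. Horn's function $H_2(a,b,c,d;e;x,y)=\sum_{p,q\ge0}\frac{(a)_{p-q}(b)_p(c)_q(d)_q}{(e)_p\,p!\,q!}x^py^q$. All functions are regarded as formal power series in $x,y$; the infinite double sum converges in the formal (degree) topology. *)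

theory Defs
  imports "HOL-Analysis.Analysis"
begin

text \<open>Formal power series in two variables x, y over the complex numbers,
  represented by their coefficient function: f p q is the coefficient of x^p y^q.\<close>
type_synonym fps2 = "nat \<Rightarrow> nat \<Rightarrow> complex"

text \<open>Pochhammer symbol with an integer index:
  (lam)_k = Gamma(lam+k)/Gamma(lam); for k = -m < 0 this is 1/((lam-1)...(lam-m)).\<close>
definition poch_int :: "complex \<Rightarrow> int \<Rightarrow> complex" where
  "poch_int lam k = (if 0 \<le> k then pochhammer lam (nat k)
                     else inverse (pochhammer (lam + of_int k) (nat (- k))))"

definition fps2_mult :: "fps2 \<Rightarrow> fps2 \<Rightarrow> fps2" where
  "fps2_mult f g = (\<lambda>p q. \<Sum>i\<le>p. \<Sum>j\<le>q. f i j * g (p - i) (q - j))"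

definition fps2_add :: "fps2 \<Rightarrow> fps2 \<Rightarrow> fps2" where
  "fps2_add f g = (\<lambda>p q. f p q + g p q)"

definition fps2_smult :: "complex \<Rightarrow> fps2 \<Rightarrow> fps2" where
  "fps2_smult c f = (\<lambda>p q. c * f p q)"

definition fps2_monom :: "nat \<Rightarrow> nat \<Rightarrow> fps2" where
  "fps2_monom i j = (\<lambda>p q. if p = i \<and> q = j then 1 else 0)"

definition fps2_neg_y :: "fps2 \<Rightarrow> fps2" where
  "fps2_neg_y f = (\<lambda>p q. (-1) ^ q * f p q)"

definition in_x :: "(nat \<Rightarrow> complex) \<Rightarrow> fps2" where
  "in_x f = (\<lambda>p q. if q = 0 then f p else 0)"

definition in_y :: "(nat \<Rightarrow> complex) \<Rightarrow> fps2" where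
  "in_y f = (\<lambda>p q. if p = 0 then f q else 0)"

definition gaussF :: "complex \<Rightarrow> complex \<Rightarrow> complex \<Rightarrow> nat \<Rightarrow> complex" where
  "gaussF a b c = (\<lambda>k. pochhammer a k * pochhammer b k / (pochhammer c k * fact k))"

definition hornH2 :: "complex \<Rightarrow> complex \<Rightarrow> complex \<Rightarrow> complex \<Rightarrow> complex \<Rightarrow> fps2" where
  "hornH2 a b c d e = (\<lambda>p q. poch_int a (int p - int q) * pochhammer b p * pochhammer c q
      * pochhammer d q / (pochhammer e p * fact p * fact q))"

definition fps2_summable :: "('i \<Rightarrow> fps2) \<Rightarrow> 'i set \<Rightarrow> bool" where
  "fps2_summable F I = (\<forall>p q. (\<lambda>i. F i p q) summable_on I)"

definition fps2_sum :: "('i \<Rightarrow> fps2) \<Rightarrow> 'i set \<Rightarrow> fps2" where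
  "fps2_sum F I = (\<lambda>p q. \<Sum>\<^sub>\<infinity>i\<in>I. F i p q)"

end

theory Submission
  imports Defs
begin

text \<open>Since (a)_p = (a)_(p-q) (a+p-q)_q, the coefficient of
  the product of the two Gauss functions is the H_2 coefficient times (a+p-q)_q / (1-a)_q.
  Each correction term contributes the same H_2 coefficient times an explicit rational factor;
  summing over l is the Vandermonde identity for binomial coefficients, and the remaining sum over
  k (including k = 0, which comes from H_2(...;x,-y) itself) is a terminating Chu--Vandermonde
  sum equal to (a+p-q)_q / (1-a)_q. Only terms with k \<le> q contribute to the coefficient of
  y^q, so all the formal sums are finite.\<close>

lemma not_Ints_add_of_int: "(a::complex) \<notin> \<int> \<Longrightarrow> a + of_int k \<notin> \<int>"
  by (metis Ints_diff Ints_of_int add_diff_cancel_right')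

lemma Gamma_nonzero_if_not_Ints: "(a::complex) \<notin> \<int> \<Longrightarrow> Gamma a \<noteq> 0"
  using Gamma_nonzero nonpos_Ints_subset_Ints by blast

lemma pochhammer_eq_Gamma_quotient_if_not_Ints:
  "(a::complex) \<notin> \<int> \<Longrightarrow> pochhammer a n = Gamma (a + of_nat n) / Gamma a"
  using pochhammer_Gamma nonpos_Ints_subset_Ints by blast

lemma poch_int_eq_Gamma_quotient:
  assumes "(a::complex) \<notin> \<int>"
  shows "poch_int a k = Gamma (a + of_int k) / Gamma a"
proof (cases "0 \<le> k")
  case True
  then show ?thesis
    using pochhammer_eq_Gamma_quotient_if_not_Ints[OF assms, of "nat k"] by (simp add: poch_int_def)
next
  case False
  have "pochhammer (a + of_int k) (nat (-k)) = Gamma a / Gamma (a + of_int k)"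
    using pochhammer_eq_Gamma_quotient_if_not_Ints[OF not_Ints_add_of_int[OF assms]] False by simp
  then show ?thesis using False by (simp add: poch_int_def)
qed

lemma pochhammer_eq_poch_int_mult:
  assumes "(a::complex) \<notin> \<int>"
  shows "pochhammer a p = poch_int a (int p - int q) * pochhammer (a + of_int (int p - int q)) q"
proof -
  have shifted: "a + of_int (int p - int q) \<notin> \<int>" using not_Ints_add_of_int[OF assms] .
  show ?thesis
    unfolding poch_int_eq_Gamma_quotient[OF assms] pochhammer_eq_Gamma_quotient_if_not_Ints[OF assms]
      pochhammer_eq_Gamma_quotient_if_not_Ints[OF shifted]
    using Gamma_nonzero_if_not_Ints[OF shifted] Gamma_nonzero_if_not_Ints[OF assms] by simp
qed

lemma poch_int_diff_of_nat:
  assumes "(a::complex) \<notin> \<int>"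
  shows "poch_int (a - of_nat m) (k + int m) = poch_int a k * ((-1) ^ m * pochhammer (1 - a) m)"
proof -
  have am: "a - of_nat m \<notin> \<int>" using not_Ints_add_of_int[OF assms, of "- int m"] by simp
  have "(-1) ^ m * pochhammer (1 - a) m = pochhammer (a - of_nat m) m"
    using pochhammer_minus[of "of_nat m - a" m] by simp
  also have "\<dots> = Gamma a / Gamma (a - of_nat m)"
    using pochhammer_eq_Gamma_quotient_if_not_Ints[OF am, of m] by simp
  finally have sign: "(-1) ^ m * pochhammer (1 - a) m = Gamma a / Gamma (a - of_nat m)" .
  have "a - of_nat m + of_int (k + int m) = a + of_int k" by simp
  then show ?thesis
    unfolding sign poch_int_eq_Gamma_quotient[OF am] poch_int_eq_Gamma_quotient[OF assms]
    using Gamma_nonzero_if_not_Ints[OF am] Gamma_nonzero_if_not_Ints[OF assms] by simp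
qed

lemma pochhammer_one_minus_nonzero:
  assumes "(a::complex) \<notin> \<int>"
  shows "pochhammer (1 - a) n \<noteq> 0"
proof
  assume "pochhammer (1 - a) n = 0"
  then obtain j where "1 - a = - of_nat j" by (auto simp: pochhammer_eq_0_iff)
  then have "a = of_nat (j + 1)" by (simp add: algebra_simps)
  then show False using assms by (metis Ints_of_nat)
qed

lemma pochhammer_of_nat_eq_binomial:
  "pochhammer (of_nat p :: 'a::field_char_0) k = of_nat ((p + k - 1) choose k) * fact k"
proof (cases p)
  case 0
  then show ?thesis by (cases k) (auto simp: pochhammer_0_left binomial_eq_0)
next
  case (Suc n)
  have "(of_nat ((p + k - 1) choose k) :: 'a) = pochhammer (of_nat p) k / fact k"
    unfolding binomial_gbinomial gbinomial_pochhammer' using Suc by (simp add: of_nat_diff algebra_simps)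
  then show ?thesis by simp
qed

lemma pochhammer_minus_of_nat:
  assumes "k \<le> q"
  shows "pochhammer (- of_nat q :: 'a::field_char_0) k = (-1) ^ k * fact q / fact (q - k)"
proof -
  have "(of_nat (q choose k) :: 'a) = (-1) ^ k * pochhammer (- of_nat q) k / fact k"
    unfolding binomial_gbinomial by (rule gbinomial_pochhammer)
  moreover have "(of_nat (q choose k) :: 'a) = fact q / (fact k * fact (q - k))"
    using binomial_fact[OF assms] by simp
  ultimately show ?thesis by (simp add: field_simps)
qed

lemma pochhammer_quotient_eq_binomial_sum:
  fixes a :: "'a::field_char_0"
  assumes nz: "pochhammer (1 - a) q \<noteq> 0"
  shows "pochhammer (a + of_int (int p - int q)) q / pochhammer (1 - a) q
    = (\<Sum>k\<le>q. (-1) ^ (q - k) * of_nat ((p + k - 1) choose k) * fact q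
                   / (fact (q - k) * pochhammer (1 - a) k))"
proof -
  have "\<forall>i\<in>{0..<q}. 1 - a \<noteq> - of_nat i" using nz by (auto simp: pochhammer_eq_0_iff)
  from Vandermonde_pochhammer[OF this, of "of_nat p"]
  have "(\<Sum>k\<le>q. pochhammer (of_nat p) k * pochhammer (- of_nat q) k / (fact k * pochhammer (1 - a) k))
      = pochhammer (1 - a - of_nat p) q / pochhammer (1 - a) q"
    by (simp add: atLeast0AtMost)
  also have "pochhammer (1 - a - of_nat p) q = (-1) ^ q * pochhammer (a + of_int (int p - int q)) q"
    using pochhammer_minus[of "a + of_nat p - 1" q] by (simp add: algebra_simps)
  finally have vandermonde:
    "(\<Sum>k\<le>q. pochhammer (of_nat p) k * pochhammer (- of_nat q) k / (fact k * pochhammer (1 - a) k))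
      = (-1) ^ q * pochhammer (a + of_int (int p - int q)) q / pochhammer (1 - a) q" by simp
  have summand: "(-1) ^ (q - k) * of_nat ((p + k - 1) choose k) * fact q
                     / (fact (q - k) * pochhammer (1 - a) k)
      = (-1) ^ q * (pochhammer (of_nat p) k * pochhammer (- of_nat q) k
                     / (fact k * pochhammer (1 - a) k))" if "k \<le> q" for k
  proof -
    have "(-1) ^ (q - k) = ((-1) ^ q * (-1) ^ k :: 'a)"
      using that by (simp add: minus_one_power_iff)
    then show ?thesis
      unfolding pochhammer_of_nat_eq_binomial pochhammer_minus_of_nat[OF that] by simp
  qed
  have "(\<Sum>k\<le>q. (-1) ^ (q - k) * of_nat ((p + k - 1) choose k) * fact q
                   / (fact (q - k) * pochhammer (1 - a) k))
      = (-1) ^ q * (\<Sum>k\<le>q. pochhammer (of_nat p) k * pochhammer (- of_nat q) k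
                              / (fact k * pochhammer (1 - a) k))"
    unfolding sum_distrib_left by (intro sum.cong refl summand) simp
  also have "\<dots> = pochhammer (a + of_int (int p - int q)) q / pochhammer (1 - a) q"
    unfolding vandermonde by (simp add: mult.assoc[symmetric])
  finally show ?thesis ..
qed

lemma sum_binomial_mult_binomial_pred:
  assumes "1 \<le> k"
  shows "(\<Sum>l=1..k. (p choose l) * ((k - 1) choose (l - 1))) = (p + k - 1) choose k"
proof -
  have "(p + k - 1) choose k = (\<Sum>i\<le>k. (p choose i) * ((k - 1) choose (k - i)))"
    using vandermonde[of p "k - 1" k] assms by simp
  also have "\<dots> = (\<Sum>i=1..k. (p choose i) * ((k - 1) choose (k - i)))"
    using assms by (simp add: atMost_atLeast0 sum.atLeast_Suc_atMost binomial_eq_0)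
  also have "\<dots> = (\<Sum>l=1..k. (p choose l) * ((k - 1) choose (l - 1)))"
  proof (intro sum.cong refl)
    fix l assume "l \<in> {1..k}"
    then have "(k - 1) - (l - 1) = k - l" and "l - 1 \<le> k - 1" by auto
    then show "(p choose l) * ((k - 1) choose (k - l)) = (p choose l) * ((k - 1) choose (l - 1))"
      using binomial_symmetric[of "l - 1" "k - 1"] by simp
  qed
  finally show ?thesis ..
qed

lemma fps2_mult_monom_left:
  "fps2_mult (fps2_monom l k) g p q = (if l \<le> p \<and> k \<le> q then g (p - l) (q - k) else 0)"
proof -
  have "fps2_mult (fps2_monom l k) g p q
      = (\<Sum>i\<le>p. if i = l then (\<Sum>j\<le>q. if j = k then g (p - i) (q - j) else 0) else 0)"
    unfolding fps2_mult_def fps2_monom_def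
    by (intro sum.cong refl) (simp add: if_distrib[of "\<lambda>x. x * _"] cong: if_cong)
  then show ?thesis by (simp add: sum.delta)
qed

lemma fps2_mult_in_x_in_y: "fps2_mult (in_x f) (in_y g) p q = f p * g q"
proof -
  have "fps2_mult (in_x f) (in_y g) p q
      = (\<Sum>i\<le>p. if i = p then (\<Sum>j\<le>q. if j = 0 then f i * g (q - j) else 0) else 0)"
    unfolding fps2_mult_def in_x_def in_y_def
    by (intro sum.cong refl) (simp add: if_distrib[of "\<lambda>x. x * _"] if_distrib[of "\<lambda>x. _ * x"] cong: if_cong)
  then show ?thesis by (simp add: sum.delta)
qed

lemma
  assumes "\<And>p q. finite (J p q)" and "\<And>p q. J p q \<subseteq> I"
    and "\<And>p q i. i \<in> I - J p q \<Longrightarrow> F i p q = 0"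
  shows fps2_summable_finite_support: "fps2_summable F I"
    and fps2_sum_finite_support: "fps2_sum F I p q = (\<Sum>i\<in>J p q. F i p q)"
proof -
  have "((\<lambda>i. F i p q) has_sum (\<Sum>i\<in>J p q. F i p q)) I" for p q
  proof (rule has_sum_cong_neutral[THEN iffD1])
    show "((\<lambda>i. F i p q) has_sum (\<Sum>i\<in>J p q. F i p q)) (J p q)"
      using assms(1) by (rule has_sum_finite)
  qed (use assms(2,3) in auto)
  then show "fps2_summable F I" and "fps2_sum F I p q = (\<Sum>i\<in>J p q. F i p q)"
    unfolding fps2_summable_def fps2_sum_def using has_sum_imp_summable infsumI by blast+
qed

definition hornH2_expansion_term ::
    "complex \<Rightarrow> complex \<Rightarrow> complex \<Rightarrow> complex \<Rightarrow> complex \<Rightarrow> nat \<Rightarrow> nat \<Rightarrow> fps2" where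
  "hornH2_expansion_term a b c d e k l =
     fps2_smult (fact (k - 1) / (fact (l - 1) * fact l * fact (k - l))
         * (-1) ^ (k - l) * pochhammer b l * pochhammer c k * pochhammer d k
         / (pochhammer (1 - a) k * pochhammer (1 - a) (k - l) * pochhammer e l))
       (fps2_mult (fps2_monom l k)
         (fps2_neg_y (hornH2 (a - of_nat k + of_nat l) (b + of_nat l) (c + of_nat k)
                             (d + of_nat k) (e + of_nat l))))"

lemma hornH2_expansion_term_coeff_eq_0:
  "q < k \<Longrightarrow> hornH2_expansion_term a b c d e k l p q = 0"
  by (simp add: hornH2_expansion_term_def fps2_smult_def fps2_mult_monom_left)

lemma hornH2_expansion_term_coeff:
  assumes a: "a \<notin> \<int>" and e: "\<forall>n::nat. e \<noteq> - of_nat n"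
    and kl: "1 \<le> l" "l \<le> k" "k \<le> q"
  shows "hornH2_expansion_term a b c d e k l p q
    = hornH2 a b c d e p q * ((-1) ^ (q - k) * of_nat ((p choose l) * ((k - 1) choose (l - 1)))
        * fact q / (fact (q - k) * pochhammer (1 - a) k))"
proof (cases "l \<le> p")
  case False
  then show ?thesis by (simp add: hornH2_expansion_term_def fps2_smult_def fps2_mult_monom_left)
next
  case lp: True
  define m where "m = k - l"
  have shift_a: "a - of_nat k + of_nat l = a - of_nat m"
    and shift_index: "int (p - l) - int (q - k) = (int p - int q) + int m"
    using kl lp by (simp_all add: m_def of_nat_diff)
  have poch_a: "poch_int (a - of_nat k + of_nat l) (int (p - l) - int (q - k))
      = poch_int a (int p - int q) * ((-1) ^ m * pochhammer (1 - a) m)"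
    unfolding shift_a shift_index by (rule poch_int_diff_of_nat[OF a])
  have poch_b: "pochhammer b p = pochhammer b l * pochhammer (b + of_nat l) (p - l)"
    and poch_e: "pochhammer e p = pochhammer e l * pochhammer (e + of_nat l) (p - l)"
    using lp by (simp_all add: pochhammer_product)
  have poch_c: "pochhammer c q = pochhammer c k * pochhammer (c + of_nat k) (q - k)"
    and poch_d: "pochhammer d q = pochhammer d k * pochhammer (d + of_nat k) (q - k)"
    using kl by (simp_all add: pochhammer_product)
  have "pochhammer e n \<noteq> 0" for n
    using e by (auto simp: pochhammer_eq_0_iff)
  moreover have "pochhammer (e + of_nat l) n \<noteq> 0" for n
  proof
    assume "pochhammer (e + of_nat l) n = 0"
    then obtain j where "e + of_nat l = - of_nat j" by (auto simp: pochhammer_eq_0_iff)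
    then have "e = - of_nat (l + j)" by (simp add: algebra_simps)
    then show False using e by blast
  qed
  moreover have "(of_nat ((p choose l) * ((k - 1) choose (l - 1))) :: complex)
      = fact p / (fact l * fact (p - l)) * (fact (k - 1) / (fact (l - 1) * fact m))"
  proof -
    have "l - 1 \<le> k - 1" and "(k - 1) - (l - 1) = m"
      using kl by (simp_all add: m_def)
    from binomial_fact[OF this(1), where 'a = complex] this(2)
    have "of_nat ((k - 1) choose (l - 1)) = (fact (k - 1) / (fact (l - 1) * fact m) :: complex)"
      by simp
    then show ?thesis
      unfolding of_nat_mult binomial_fact[OF lp] by simp
  qed
  ultimately show ?thesis
    unfolding hornH2_expansion_term_def fps2_smult_def fps2_mult_monom_left fps2_neg_y_def
      hornH2_def poch_a poch_b poch_c poch_d poch_e m_def[symmetric]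
    using lp kl pochhammer_one_minus_nonzero[OF a] by (simp add: field_simps)
qed

lemma sum_hornH2_expansion_term_coeff:
  assumes "a \<notin> \<int>" and "\<forall>n::nat. e \<noteq> - of_nat n" and "1 \<le> k" "k \<le> q"
  shows "(\<Sum>l=1..k. hornH2_expansion_term a b c d e k l p q)
    = hornH2 a b c d e p q * ((-1) ^ (q - k) * of_nat ((p + k - 1) choose k) * fact q
                               / (fact (q - k) * pochhammer (1 - a) k))"
proof -
  have "(\<Sum>l=1..k. hornH2_expansion_term a b c d e k l p q)
      = hornH2 a b c d e p q * ((-1) ^ (q - k) * fact q / (fact (q - k) * pochhammer (1 - a) k))
        * of_nat (\<Sum>l=1..k. (p choose l) * ((k - 1) choose (l - 1)))"
    unfolding of_nat_sum sum_distrib_left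
    by (intro sum.cong refl) (simp add: hornH2_expansion_term_coeff assms)
  then show ?thesis
    unfolding sum_binomial_mult_binomial_pred[OF assms(3)] by simp
qed

lemma gaussF_mult_gaussF_eq_hornH2:
  assumes "a \<notin> \<int>"
  shows "gaussF a b e p * gaussF c d (1 - a) q
    = hornH2 a b c d e p q * (pochhammer (a + of_int (int p - int q)) q / pochhammer (1 - a) q)"
  unfolding gaussF_def hornH2_def pochhammer_eq_poch_int_mult[OF assms, of p q] by (simp add: mult_ac)

lemma gaussF_mult_gaussF_coeff_expansion:
  assumes a: "a \<notin> \<int>" and e: "\<forall>n::nat. e \<noteq> - of_nat n"
  shows "gaussF a b e p * gaussF c d (1 - a) q
    = (-1) ^ q * hornH2 a b c d e p q
      + (\<Sum>k=1..q. \<Sum>l=1..k. hornH2_expansion_term a b c d e k l p q)"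
proof -
  define t where "t k = (-1) ^ (q - k) * of_nat ((p + k - 1) choose k) * fact q
                         / (fact (q - k) * pochhammer (1 - a) k)" for k
  have "(-1) ^ q * hornH2 a b c d e p q
      + (\<Sum>k=1..q. \<Sum>l=1..k. hornH2_expansion_term a b c d e k l p q)
      = hornH2 a b c d e p q * (t 0 + (\<Sum>k=1..q. t k))"
  proof -
    have "(\<Sum>k=1..q. \<Sum>l=1..k. hornH2_expansion_term a b c d e k l p q)
        = (\<Sum>k=1..q. hornH2 a b c d e p q * t k)"
      unfolding t_def by (intro sum.cong refl sum_hornH2_expansion_term_coeff[OF a e]) auto
    then show ?thesis by (simp add: t_def sum_distrib_left distrib_left)
  qed
  also have "t 0 + (\<Sum>k=1..q. t k) = (\<Sum>k\<le>q. t k)"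
    by (simp add: atMost_atLeast0 sum.atLeast_Suc_atMost)
  also have "\<dots> = pochhammer (a + of_int (int p - int q)) q / pochhammer (1 - a) q"
    unfolding t_def
    by (rule pochhammer_quotient_eq_binomial_sum[symmetric]) (rule pochhammer_one_minus_nonzero[OF a])
  finally show ?thesis
    by (simp add: gaussF_mult_gaussF_eq_hornH2[OF a])
qed

theorem mainTheorem3:
  fixes a b c d e :: complex
  assumes "a \<notin> \<int>"
    and "\<forall>n::nat. e \<noteq> - of_nat n"
  defines "T \<equiv> (\<lambda>(k, l).
      fps2_smult (fact (k - 1) / (fact (l - 1) * fact l * fact (k - l))
          * (-1) ^ (k - l) * pochhammer b l * pochhammer c k * pochhammer d k
          / (pochhammer (1 - a) k * pochhammer (1 - a) (k - l) * pochhammer e l))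
        (fps2_mult (fps2_monom l k)
          (fps2_neg_y (hornH2 (a - of_nat k + of_nat l) (b + of_nat l) (c + of_nat k)
                              (d + of_nat k) (e + of_nat l)))))"
    and "I \<equiv> {(k, l). 1 \<le> k \<and> 1 \<le> l \<and> l \<le> (k::nat)}"
  shows "fps2_summable T I \<and>
    fps2_mult (in_x (gaussF a b e)) (in_y (gaussF c d (1 - a)))
      = fps2_add (fps2_neg_y (hornH2 a b c d e)) (fps2_sum T I)"
proof -
  have T: "T = (\<lambda>(k, l). hornH2_expansion_term a b c d e k l)"
    unfolding T_def hornH2_expansion_term_def ..
  define J where "J p q = (SIGMA k:{1..q}. {1..k})" for p q :: nat
  have J: "finite (J p q)" "J p q \<subseteq> I" "\<And>i. i \<in> I - J p q \<Longrightarrow> T i p q = 0" for p q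
    unfolding J_def I_def T by (auto intro!: hornH2_expansion_term_coeff_eq_0)
  have "fps2_sum T I p q = (\<Sum>k=1..q. \<Sum>l=1..k. hornH2_expansion_term a b c d e k l p q)" for p q
    by (simp only: fps2_sum_finite_support[OF J]) (simp add: J_def T sum.Sigma case_prod_unfold)
  then show ?thesis
    using fps2_summable_finite_support[of J I T, OF J]
    by (auto intro!: ext simp: fps2_mult_in_x_in_y fps2_add_def fps2_neg_y_def
        gaussF_mult_gaussF_coeff_expansion[OF assms(1,2)])
qed

end
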